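(* Let $q$ be a prime power, $\ell\ge1$, and let $\mathcal{A}$ be a central hyperplane arrangement in $\mathbb{F}_q^\ell$. If $\chi(\mathcal{A}, q^k)=0$ for some integer $k\geq 0$, then $\chi(\mathcal{A}, q^j)=0$ for all integers $j$ with $0\leq j\leq k$.
   Context: A (central) hyperplane arrangement $\mathcal{A}$ in a vector space $V$ over a field $\mathbb{K}$ is a finite set of linear subspaces of codimension one. $L(\mathcal{A})$ denotes the set of all intersections of subsets of $\mathcal{A}$ (including $V$ itself as the empty intersection), ordered by reverse inclusion, with minimal element $\hat 0=V$. The Möbius function $\mu:L(\mathcal{A})\to\mathbb{Z}$ is defined by $\mu(\hat0)=1$ and $\mu(X)=-\sum_{Y<X}\mu(Y)$ for $X>\hat 0$. The characteristic polynomial is $\chi(\mathcal{A},t)=\sum_{X\in L(\mathcal{A})}\mu(X)t^{\dim X}$. *)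

theory Defs
  imports "HOL-Analysis.Analysis"
begin

definition is_hyperplane :: "('a::field ^ 'n) set \<Rightarrow> bool" where
  "is_hyperplane H \<longleftrightarrow> vec.subspace H \<and> vec.dim H + 1 = vec.dim (UNIV :: ('a ^ 'n) set)"

definition central_arrangement :: "('a::field ^ 'n) set set \<Rightarrow> bool" where
  "central_arrangement A \<longleftrightarrow> finite A \<and> (\<forall>H\<in>A. is_hyperplane H)"

definition intersection_lattice :: "('a ^ 'n) set set \<Rightarrow> ('a ^ 'n) set set" where
  "intersection_lattice A = {\<Inter> B | B. B \<subseteq> A}"

text \<open>Moebius function of L(A) (ordered by reverse inclusion, bottom = V):
  mu(V) = 1, mu(X) = - sum of mu(Y) over Y in L(A) with Y < X, i.e. X proper subset of Y.\<close>
function mobius :: "('a::{finite,field} ^ 'n) set set \<Rightarrow> ('a ^ 'n) set \<Rightarrow> int" where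
  "mobius A X = (if X = UNIV then 1
     else - (\<Sum>Y \<in> {Y \<in> intersection_lattice A. X \<subset> Y}. mobius A Y))"
  by pat_completeness auto
termination
proof (relation "Wellfounded.measure (\<lambda>(A, X). card (UNIV - X))")
  show "wf (Wellfounded.measure (\<lambda>(A, X). card (UNIV - X)))" by simp
next
  fix A :: "('a::{finite,field} ^ 'n) set set" and X Y :: "('a ^ 'n) set"
  assume "X \<noteq> UNIV" "Y \<in> {Y \<in> intersection_lattice A. X \<subset> Y}"
  then have "UNIV - Y \<subset> UNIV - X" by auto
  then show "((A, Y), (A, X)) \<in> Wellfounded.measure (\<lambda>(A, X). card (UNIV - X))"
    by (simp add: psubset_card_mono)
qed

definition char_poly :: "('a::{finite,field} ^ 'n) set set \<Rightarrow> int \<Rightarrow> int" where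
  "char_poly A t = (\<Sum>X \<in> intersection_lattice A. mobius A X * t ^ vec.dim X)"

end

theory Submission
  imports Defs
begin

text \<open>Every flat \<open>X\<close> of \<open>\<A>\<close> is a subspace of \<open>V = \<bbbF>\<^sub>q\<^sup>n\<close>, so
  \<open>(q\<^sup>k)\<^bsup>dim X\<^esup> = |X\<^sup>k|\<close>, and exchanging sums gives \<open>\<chi>(\<A>, q\<^sup>k) = \<Sum>\<^sub>v \<Sum>\<^sub>X \<mu>(X)\<close>, where \<open>v\<close>
  ranges over \<open>V\<^sup>k\<close> and \<open>X\<close> over the flats containing \<open>v\<^sub>1, \<dots>, v\<^sub>k\<close>. These are exactly
  the flats above the intersection of all hyperplanes containing every \<open>v\<^sub>i\<close>, so by the
  recursion defining \<open>\<mu>\<close> the inner sum is 1 if no hyperplane of \<open>\<A>\<close> contains all \<open>v\<^sub>i\<close>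
  and 0 otherwise. Hence \<open>\<chi>(\<A>, q\<^sup>k)\<close> counts the \<open>k\<close>-tuples of vectors not contained in
  a common hyperplane of \<open>\<A>\<close>, and padding tuples with zero vectors shows that this count
  is monotone in \<open>k\<close>.\<close>

lemma (in vector_space) card_subspace:
  assumes "subspace S" and "finite S"
  shows "card S = CARD('a) ^ dim S"
proof -
  obtain B where B: "B \<subseteq> S" "independent B" "S \<subseteq> span B" "card B = dim S"
    using basis_exists by blast
  have "finite B"
    using B(1) \<open>finite S\<close> finite_subset by blast
  have "span B = S"
    using B assms(1) span_minimal by blast
  define combination where "combination = (\<lambda>u. \<Sum>v\<in>B. scale (u v) v)"
  have "combination u \<in> combination ` (B \<rightarrow>\<^sub>E UNIV)" for u
  proof (rule image_eqI)
    show "combination u = combination (restrict u B)"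
      unfolding combination_def by (rule sum.cong) auto
  qed simp
  then have image_eq: "combination ` (B \<rightarrow>\<^sub>E UNIV) = S"
    using span_finite[OF \<open>finite B\<close>] \<open>span B = S\<close> unfolding combination_def by auto
  have "inj_on combination (B \<rightarrow>\<^sub>E UNIV)"
  proof
    fix u w assume u: "u \<in> B \<rightarrow>\<^sub>E UNIV" and w: "w \<in> B \<rightarrow>\<^sub>E UNIV"
      and "combination u = combination w"
    then have "(\<Sum>v\<in>B. scale (u v - w v) v) = 0"
      unfolding combination_def by (simp add: scale_left_diff_distrib sum_subtractf)
    then have "\<forall>v\<in>B. u v - w v = 0"
      using B(2) dependent_finite[OF \<open>finite B\<close>, THEN iffD2, OF exI[of _ "\<lambda>v. u v - w v"]]
      by blast
    then show "u = w"
      using u w by (intro PiE_ext) auto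
  qed
  then have "card S = card (B \<rightarrow>\<^sub>E (UNIV :: 'a set))"
    using card_image image_eq by metis
  also have "\<dots> = CARD('a) ^ dim S"
    using B(4) by (simp add: card_PiE \<open>finite B\<close>)
  finally show ?thesis .
qed

declare mobius.simps [simp del] \<comment> \<open>the recursion unfolds forever under simp\<close>

lemma hyperplane_neq_UNIV: "is_hyperplane H \<Longrightarrow> H \<noteq> UNIV"
  unfolding is_hyperplane_def by auto

lemma UNIV_in_intersection_lattice: "UNIV \<in> intersection_lattice A"
  unfolding intersection_lattice_def by auto

lemma intersection_lattice_subspace:
  assumes "central_arrangement A" and "X \<in> intersection_lattice A"
  shows "vec.subspace X"
proof -
  obtain B where "B \<subseteq> A" "X = \<Inter> B"
    using assms(2) unfolding intersection_lattice_def by blast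
  with assms(1) show ?thesis
    unfolding central_arrangement_def is_hyperplane_def by (auto intro: vec.subspace_Inter)
qed

lemma sum_mobius_above:
  fixes A :: "('a::{finite,field} ^ 'n) set set"
  assumes "X \<in> intersection_lattice A"
  shows "(\<Sum>Y | Y \<in> intersection_lattice A \<and> X \<subseteq> Y. mobius A Y) = (if X = UNIV then 1 else 0)"
proof (cases "X = UNIV")
  case True
  then have "{Y. Y \<in> intersection_lattice A \<and> X \<subseteq> Y} = {UNIV}"
    using UNIV_in_intersection_lattice by auto
  with True show ?thesis by (simp add: mobius.simps)
next
  case False
  have "{Y. Y \<in> intersection_lattice A \<and> X \<subseteq> Y} = insert X {Y \<in> intersection_lattice A. X \<subset> Y}"
    using assms by auto
  moreover have "mobius A X = - (\<Sum>Y \<in> {Y \<in> intersection_lattice A. X \<subset> Y}. mobius A Y)"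
    using False by (subst mobius.simps) simp
  ultimately show ?thesis
    using False by simp
qed

definition avoiding_tuples :: "('a ^ 'n) set set \<Rightarrow> nat \<Rightarrow> (nat \<Rightarrow> 'a ^ 'n) set" where
  "avoiding_tuples A k = {v \<in> {..<k} \<rightarrow>\<^sub>E UNIV. \<forall>H\<in>A. \<exists>i<k. v i \<notin> H}"

lemma finite_avoiding_tuples: "finite (avoiding_tuples (A :: ('a::finite ^ 'n) set set) k)"
  unfolding avoiding_tuples_def
  by (rule finite_subset[of _ "{..<k} \<rightarrow>\<^sub>E UNIV"]) (auto intro: finite_PiE)

lemma sum_mobius_containing_tuple:
  fixes A :: "('a::{finite,field} ^ 'n) set set"
  assumes "central_arrangement A"
  shows "(\<Sum>X | X \<in> intersection_lattice A \<and> (\<forall>i<k. v i \<in> X). mobius A X)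
         = (if \<forall>H\<in>A. \<exists>i<k. v i \<notin> H then 1 else 0)"
proof -
  define C where "C = \<Inter> {H\<in>A. \<forall>i<k. v i \<in> H}"
  have C_flat: "C \<in> intersection_lattice A"
    unfolding C_def intersection_lattice_def by blast
  have "X \<in> intersection_lattice A \<and> (\<forall>i<k. v i \<in> X) \<longleftrightarrow> X \<in> intersection_lattice A \<and> C \<subseteq> X"
    for X
  proof (cases "X \<in> intersection_lattice A")
    case True
    then obtain B where "B \<subseteq> A" "X = \<Inter> B"
      unfolding intersection_lattice_def by blast
    then show ?thesis
      unfolding C_def by auto
  qed simp
  then have flats_eq: "{X. X \<in> intersection_lattice A \<and> (\<forall>i<k. v i \<in> X)}
      = {X \<in> intersection_lattice A. C \<subseteq> X}"
    by blast
  have "(\<Sum>X | X \<in> intersection_lattice A \<and> (\<forall>i<k. v i \<in> X). mobius A X)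
      = (if C = UNIV then 1 else 0)"
    unfolding flats_eq by (rule sum_mobius_above[OF C_flat])
  moreover have "C = UNIV \<longleftrightarrow> (\<forall>H\<in>A. \<exists>i<k. v i \<notin> H)"
  proof
    assume "C = UNIV"
    show "\<forall>H\<in>A. \<exists>i<k. v i \<notin> H"
    proof (rule ballI, rule ccontr)
      fix H assume "H \<in> A" and "\<not> (\<exists>i<k. v i \<notin> H)"
      then have "C \<subseteq> H"
        unfolding C_def by blast
      moreover have "H \<noteq> UNIV"
        using assms \<open>H \<in> A\<close> hyperplane_neq_UNIV unfolding central_arrangement_def by blast
      ultimately show False
        using \<open>C = UNIV\<close> by blast
    qed
  next
    assume "\<forall>H\<in>A. \<exists>i<k. v i \<notin> H"
    then have "{H\<in>A. \<forall>i<k. v i \<in> H} = {}"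
      by blast
    then show "C = UNIV"
      unfolding C_def by (simp only: Inter_empty)
  qed
  ultimately show ?thesis by simp
qed

lemma char_poly_eq_card_avoiding_tuples:
  fixes A :: "('a::{finite,field} ^ 'n) set set"
  assumes "central_arrangement A"
  shows "char_poly A (int CARD('a) ^ k) = int (card (avoiding_tuples A k))"
proof -
  define P where "P = {..<k} \<rightarrow>\<^sub>E (UNIV :: ('a ^ 'n) set)"
  have "finite P"
    unfolding P_def by (intro finite_PiE) auto
  have tuples_in: "{..<k} \<rightarrow>\<^sub>E X = {v \<in> P. \<forall>i<k. v i \<in> X}" for X :: "('a ^ 'n) set"
    unfolding P_def by (auto simp: PiE_def Pi_def)
  have "(int CARD('a) ^ k) ^ vec.dim X = int (card {v \<in> P. \<forall>i<k. v i \<in> X})"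
    if "X \<in> intersection_lattice A" for X
  proof -
    have "card X = CARD('a) ^ vec.dim X"
      using vec.card_subspace[OF intersection_lattice_subspace[OF assms that]] by simp
    then show ?thesis
      by (simp add: tuples_in[symmetric] card_PiE power_mult[symmetric] mult.commute)
  qed
  then have "char_poly A (int CARD('a) ^ k)
      = (\<Sum>X\<in>intersection_lattice A. \<Sum>v | v \<in> P \<and> (\<forall>i<k. v i \<in> X). mobius A X)"
    unfolding char_poly_def by (intro sum.cong) simp_all
  also have "\<dots> = (\<Sum>v\<in>P. \<Sum>X | X \<in> intersection_lattice A \<and> (\<forall>i<k. v i \<in> X). mobius A X)"
    using \<open>finite P\<close> by (intro sum.swap_restrict) auto
  also have "\<dots> = (\<Sum>v\<in>P. if \<forall>H\<in>A. \<exists>i<k. v i \<notin> H then 1 else 0)"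
    by (simp only: sum_mobius_containing_tuple[OF assms])
  also have "\<dots> = int (card (avoiding_tuples A k))"
    using \<open>finite P\<close> by (simp add: sum.If_cases avoiding_tuples_def P_def Int_def)
  finally show ?thesis .
qed

lemma card_avoiding_tuples_mono:
  fixes A :: "('a::{finite,zero} ^ 'n) set set"
  assumes "j \<le> k"
  shows "card (avoiding_tuples A j) \<le> card (avoiding_tuples A k)"
proof -
  define pad :: "(nat \<Rightarrow> 'a ^ 'n) \<Rightarrow> nat \<Rightarrow> 'a ^ 'n"
    where "pad = (\<lambda>v i. if j \<le> i \<and> i < k then 0 else v i)"
  have "inj_on pad (avoiding_tuples A j)"
  proof
    fix v w assume v: "v \<in> avoiding_tuples A j" and w: "w \<in> avoiding_tuples A j"
      and "pad v = pad w"
    then have "v i = w i" if "i < j" for i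
      using fun_cong[of "pad v" "pad w" i] that unfolding pad_def by simp
    then show "v = w"
      using v w unfolding avoiding_tuples_def by (intro PiE_ext[of v "{..<j}"]) auto
  qed
  moreover have "pad v \<in> avoiding_tuples A k" if v: "v \<in> avoiding_tuples A j" for v
  proof -
    have "pad v \<in> {..<k} \<rightarrow>\<^sub>E UNIV"
      using assms v unfolding pad_def avoiding_tuples_def by (auto simp: PiE_iff extensional_def)
    moreover have "\<exists>i<k. pad v i \<notin> H" if "H \<in> A" for H
    proof -
      obtain i where "i < j" "v i \<notin> H"
        using v \<open>H \<in> A\<close> unfolding avoiding_tuples_def by blast
      then show ?thesis
        using assms unfolding pad_def by (intro exI[of _ i]) simp
    qed
    ultimately show ?thesis
      unfolding avoiding_tuples_def by blast
  qed
  ultimately show ?thesis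
    by (intro card_inj_on_le finite_avoiding_tuples) auto
qed

theorem mainTheorem2:
  fixes A :: "('a::{finite,field} ^ 'n) set set" and k :: nat
  assumes "central_arrangement A"
    and "char_poly A (int CARD('a) ^ k) = 0"
  shows "\<forall>j::nat. j \<le> k \<longrightarrow> char_poly A (int CARD('a) ^ j) = 0"
  using card_avoiding_tuples_mono[of _ k A] assms
  by (simp add: char_poly_eq_card_avoiding_tuples)

end
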